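(* Let $H$ be a Hopf algebra with antipode $S$, $C$ a coalgebra, and let $P(B,C,\psi)$ be a $(P,C)_\psi$-extension, where $P$ is moreover an $(H,C)$-bicomodule and a left $H$-comodule algebra. Suppose that either (a) there exists a colifting of the translation map $\tilde\tau:C\to P\otimes P$, $c\mapsto c^{\tilde{[1]}}\otimes c^{\tilde{[2]}}$, such that for all $c\in C$: $c^{\tilde{[1]}}{}_{(-1)}c^{\tilde{[2]}}{}_{(-1)}\otimes c^{\tilde{[1]}}{}_{(0)}\otimes c^{\tilde{[2]}}{}_{(0)}=1_H\otimes c^{\tilde{[1]}}\otimes c^{\tilde{[2]}}$; or (b) $P^C(B)$ is a $C$-coalgebra Galois extension and $B\subseteq{}^{\mathrm{co}H}P$. Then the entwining map $\psi$ commutes with the left $H$-coaction on $P$.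
   Context: An entwining structure $(P,C)_\psi$ consists of an algebra $P$, a coalgebra $C$ and a linear map $\psi:C\otimes P\to P\otimes C$, written $\psi(c\otimes p)=p_\alpha\otimes c^\alpha$, with $\psi(c\otimes pq)=p_\alpha q_\beta\otimes c^{\alpha\beta}$, $\psi(c\otimes 1)=1\otimes c$, $p_\alpha\otimes c^\alpha{}_{(1)}\otimes c^\alpha{}_{(2)}=p_{\alpha\beta}\otimes c_{(1)}{}^\beta\otimes c_{(2)}{}^\alpha$, $p_\alpha\varepsilon(c^\alpha)=\varepsilon(c)p$. $P$ is an entwined module if it has a right $C$-coaction $\rho^C(p)=p_{(0)}\otimes p_{(1)}$ with $\rho^C(pq)=p_{(0)}\psi(p_{(1)}\otimes q)$. A $(P,C)_\psi$-extension $P(B,C,\psi)$ means $P$ is an entwined module and $B=P^{\mathrm{co}C}=\{b\in P:\rho^C(bp)=b\rho^C(p)\ \forall p\}$. $P^C(B)$ is a $C$-coalgebra Galois extension if $P\otimes_BP\to P\otimes C$, $p\otimes_Bp'\mapsto pp'_{(0)}\otimes p'_{(1)}$ is bijective. Left coaction: $p\mapsto p_{(-1)}\otimes p_{(0)}$; ${}^{\mathrm{co}H}P=\{p:{}^H\rho(p)=1_H\otimes p\}$; $(H,C)$-bicomodule means commuting left $H$- and right $C$-coactions; left $H$-comodule algebra means the coaction is an algebra map. A colifting of the translation map is a linear $\tilde\tau:C\to P\otimes P$ with $c^{\tilde{[1]}}c^{\tilde{[2]}}{}_{(0)}\otimes c^{\tilde{[2]}}{}_{(1)}=1_P\otimes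 c$ for all $c$. $\psi$ commutes with the left $H$-coaction if $({}^H\rho\otimes C)(\psi(c\otimes p))=p_{(-1)}\otimes\psi(c\otimes p_{(0)})$ for all $c\in C$, $p\in P$. *)

theory Defs
  imports Complex_Main
begin

text \<open>
  An element of a tensor product V (x) W is represented by a finite
  list of pairs [(v1,w1),...,(vn,wn)] standing for v1 (x) w1 + ... + vn (x) wn; two such
  lists denote the same tensor iff every bilinear form V x W -> k takes the same value on
  them (the dual of V (x) W is the space of bilinear forms, and linear functionals separate
  points of a vector space).  Likewise for threefold tensors with trilinear forms.
  A linear map into a tensor product is given by a function returning representing lists,
  required to be linear modulo this identification; a linear map out of V (x) W is given by
  its (bi)linear action on pure tensors.  Sweedler sums are sums over these lists.
\<close>

definition bilinear_map ::
  "('k::field \<Rightarrow> 'a::ab_group_add \<Rightarrow> 'a) \<Rightarrow> ('k \<Rightarrow> 'b::ab_group_add \<Rightarrow> 'b)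
   \<Rightarrow> ('k \<Rightarrow> 'c::ab_group_add \<Rightarrow> 'c) \<Rightarrow> ('a \<Rightarrow> 'b \<Rightarrow> 'c) \<Rightarrow> bool" where
  "bilinear_map sA sB sC f \<longleftrightarrow>
     (\<forall>a. Vector_Spaces.linear sB sC (f a)) \<and> (\<forall>b. Vector_Spaces.linear sA sC (\<lambda>a. f a b))"

definition trilinear_form ::
  "('k::field \<Rightarrow> 'a::ab_group_add \<Rightarrow> 'a) \<Rightarrow> ('k \<Rightarrow> 'b::ab_group_add \<Rightarrow> 'b)
   \<Rightarrow> ('k \<Rightarrow> 'c::ab_group_add \<Rightarrow> 'c) \<Rightarrow> ('a \<Rightarrow> 'b \<Rightarrow> 'c \<Rightarrow> 'k) \<Rightarrow> bool" where
  "trilinear_form sA sB sC f \<longleftrightarrow>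
     (\<forall>b c. Vector_Spaces.linear sA (*) (\<lambda>a. f a b c)) \<and>
     (\<forall>a c. Vector_Spaces.linear sB (*) (\<lambda>b. f a b c)) \<and>
     (\<forall>a b. Vector_Spaces.linear sC (*) (\<lambda>c. f a b c))"

definition tsum2 :: "('a \<Rightarrow> 'b \<Rightarrow> 'k::comm_monoid_add) \<Rightarrow> ('a \<times> 'b) list \<Rightarrow> 'k" where
  "tsum2 \<Phi> xs = sum_list (map (\<lambda>(a, b). \<Phi> a b) xs)"

definition tsum3 :: "('a \<Rightarrow> 'b \<Rightarrow> 'c \<Rightarrow> 'k::comm_monoid_add) \<Rightarrow> ('a \<times> 'b \<times> 'c) list \<Rightarrow> 'k" where
  "tsum3 \<Phi> xs = sum_list (map (\<lambda>(a, b, c). \<Phi> a b c) xs)"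

definition teq2 :: "('k::field \<Rightarrow> 'a::ab_group_add \<Rightarrow> 'a) \<Rightarrow> ('k \<Rightarrow> 'b::ab_group_add \<Rightarrow> 'b)
   \<Rightarrow> ('a \<times> 'b) list \<Rightarrow> ('a \<times> 'b) list \<Rightarrow> bool" where
  "teq2 sA sB xs ys \<longleftrightarrow> (\<forall>\<Phi>. bilinear_map sA sB (*) \<Phi> \<longrightarrow> tsum2 \<Phi> xs = tsum2 \<Phi> ys)"

definition teq3 :: "('k::field \<Rightarrow> 'a::ab_group_add \<Rightarrow> 'a) \<Rightarrow> ('k \<Rightarrow> 'b::ab_group_add \<Rightarrow> 'b)
   \<Rightarrow> ('k \<Rightarrow> 'c::ab_group_add \<Rightarrow> 'c) \<Rightarrow> ('a \<times> 'b \<times> 'c) list \<Rightarrow> ('a \<times> 'b \<times> 'c) list \<Rightarrow> bool" where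
  "teq3 sA sB sC xs ys \<longleftrightarrow> (\<forall>\<Phi>. trilinear_form sA sB sC \<Phi> \<longrightarrow> tsum3 \<Phi> xs = tsum3 \<Phi> ys)"

definition tlinear :: "('k::field \<Rightarrow> 'v::ab_group_add \<Rightarrow> 'v) \<Rightarrow> ('k \<Rightarrow> 'a::ab_group_add \<Rightarrow> 'a)
   \<Rightarrow> ('k \<Rightarrow> 'b::ab_group_add \<Rightarrow> 'b) \<Rightarrow> ('v \<Rightarrow> ('a \<times> 'b) list) \<Rightarrow> bool" where
  "tlinear sV sA sB F \<longleftrightarrow>
     (\<forall>\<Phi>. bilinear_map sA sB (*) \<Phi> \<longrightarrow> Vector_Spaces.linear sV (*) (\<lambda>x. tsum2 \<Phi> (F x)))"

definition tbilinear :: "('k::field \<Rightarrow> 'v::ab_group_add \<Rightarrow> 'v) \<Rightarrow> ('k \<Rightarrow> 'w::ab_group_add \<Rightarrow> 'w)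
   \<Rightarrow> ('k \<Rightarrow> 'a::ab_group_add \<Rightarrow> 'a) \<Rightarrow> ('k \<Rightarrow> 'b::ab_group_add \<Rightarrow> 'b)
   \<Rightarrow> ('v \<Rightarrow> 'w \<Rightarrow> ('a \<times> 'b) list) \<Rightarrow> bool" where
  "tbilinear sV sW sA sB F \<longleftrightarrow>
     (\<forall>\<Phi>. bilinear_map sA sB (*) \<Phi> \<longrightarrow> bilinear_map sV sW (*) (\<lambda>x y. tsum2 \<Phi> (F x y)))"

definition algebra :: "('k::field \<Rightarrow> 'a::ab_group_add \<Rightarrow> 'a) \<Rightarrow> ('a \<Rightarrow> 'a \<Rightarrow> 'a) \<Rightarrow> 'a \<Rightarrow> bool" where
  "algebra s m u \<longleftrightarrow> vector_space s \<and> bilinear_map s s s m \<and>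
     (\<forall>x y z. m (m x y) z = m x (m y z)) \<and> (\<forall>x. m u x = x \<and> m x u = x)"

definition coalgebra :: "('k::field \<Rightarrow> 'c::ab_group_add \<Rightarrow> 'c) \<Rightarrow> ('c \<Rightarrow> ('c \<times> 'c) list)
   \<Rightarrow> ('c \<Rightarrow> 'k) \<Rightarrow> bool" where
  "coalgebra s \<Delta> \<epsilon> \<longleftrightarrow> vector_space s \<and> tlinear s s s \<Delta> \<and> Vector_Spaces.linear s (*) \<epsilon> \<and>
     (\<forall>c. teq3 s s s
        (concat (map (\<lambda>(c1, c2). map (\<lambda>(x, y). (x, y, c2)) (\<Delta> c1)) (\<Delta> c)))
        (concat (map (\<lambda>(c1, c2). map (\<lambda>(x, y). (c1, x, y)) (\<Delta> c2)) (\<Delta> c)))) \<and>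
     (\<forall>c. sum_list (map (\<lambda>(c1, c2). s (\<epsilon> c1) c2) (\<Delta> c)) = c) \<and>
     (\<forall>c. sum_list (map (\<lambda>(c1, c2). s (\<epsilon> c2) c1) (\<Delta> c)) = c)"

definition hopf_algebra :: "('k::field \<Rightarrow> 'h::ab_group_add \<Rightarrow> 'h) \<Rightarrow> ('h \<Rightarrow> 'h \<Rightarrow> 'h) \<Rightarrow> 'h
   \<Rightarrow> ('h \<Rightarrow> ('h \<times> 'h) list) \<Rightarrow> ('h \<Rightarrow> 'k) \<Rightarrow> ('h \<Rightarrow> 'h) \<Rightarrow> bool" where
  "hopf_algebra s m u \<Delta> \<epsilon> S \<longleftrightarrow> algebra s m u \<and> coalgebra s \<Delta> \<epsilon> \<and>
     (\<forall>x y. teq2 s s (\<Delta> (m x y))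
        (concat (map (\<lambda>(x1, x2). map (\<lambda>(y1, y2). (m x1 y1, m x2 y2)) (\<Delta> y)) (\<Delta> x)))) \<and>
     teq2 s s (\<Delta> u) [(u, u)] \<and>
     (\<forall>x y. \<epsilon> (m x y) = \<epsilon> x * \<epsilon> y) \<and> \<epsilon> u = 1 \<and>
     Vector_Spaces.linear s s S \<and>
     (\<forall>x. sum_list (map (\<lambda>(x1, x2). m (S x1) x2) (\<Delta> x)) = s (\<epsilon> x) u) \<and>
     (\<forall>x. sum_list (map (\<lambda>(x1, x2). m x1 (S x2)) (\<Delta> x)) = s (\<epsilon> x) u)"

definition entwining :: "('k::field \<Rightarrow> 'p::ab_group_add \<Rightarrow> 'p) \<Rightarrow> ('p \<Rightarrow> 'p \<Rightarrow> 'p) \<Rightarrow> 'p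
   \<Rightarrow> ('k \<Rightarrow> 'c::ab_group_add \<Rightarrow> 'c) \<Rightarrow> ('c \<Rightarrow> ('c \<times> 'c) list) \<Rightarrow> ('c \<Rightarrow> 'k)
   \<Rightarrow> ('c \<Rightarrow> 'p \<Rightarrow> ('p \<times> 'c) list) \<Rightarrow> bool" where
  "entwining sP mP uP sC \<Delta> \<epsilon> \<psi> \<longleftrightarrow> algebra sP mP uP \<and> coalgebra sC \<Delta> \<epsilon> \<and>
     tbilinear sC sP sP sC \<psi> \<and>
     (\<forall>c p q. teq2 sP sC (\<psi> c (mP p q))
        (concat (map (\<lambda>(p', c'). map (\<lambda>(q', c''). (mP p' q', c'')) (\<psi> c' q)) (\<psi> c p)))) \<and>
     (\<forall>c. teq2 sP sC (\<psi> c uP) [(uP, c)]) \<and>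
     (\<forall>c p. teq3 sP sC sC
        (concat (map (\<lambda>(p', c'). map (\<lambda>(x, y). (p', x, y)) (\<Delta> c')) (\<psi> c p)))
        (concat (map (\<lambda>(c1, c2). concat (map (\<lambda>(p', c2').
            map (\<lambda>(p'', c1'). (p'', c1', c2')) (\<psi> c1 p')) (\<psi> c2 p))) (\<Delta> c)))) \<and>
     (\<forall>c p. sum_list (map (\<lambda>(p', c'). sP (\<epsilon> c') p') (\<psi> c p)) = sP (\<epsilon> c) p)"

text \<open>Right C-comodule P, rho(p) = p_(0) (x) p_(1).\<close>
definition right_comodule :: "('k::field \<Rightarrow> 'p::ab_group_add \<Rightarrow> 'p) \<Rightarrow> ('k \<Rightarrow> 'c::ab_group_add \<Rightarrow> 'c)
   \<Rightarrow> ('c \<Rightarrow> ('c \<times> 'c) list) \<Rightarrow> ('c \<Rightarrow> 'k) \<Rightarrow> ('p \<Rightarrow> ('p \<times> 'c) list) \<Rightarrow> bool" where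
  "right_comodule sP sC \<Delta> \<epsilon> \<rho> \<longleftrightarrow> vector_space sP \<and> tlinear sP sP sC \<rho> \<and>
     (\<forall>p. teq3 sP sC sC
        (concat (map (\<lambda>(p0, p1). map (\<lambda>(x, y). (x, y, p1)) (\<rho> p0)) (\<rho> p)))
        (concat (map (\<lambda>(p0, p1). map (\<lambda>(x, y). (p0, x, y)) (\<Delta> p1)) (\<rho> p)))) \<and>
     (\<forall>p. sum_list (map (\<lambda>(p0, p1). sP (\<epsilon> p1) p0) (\<rho> p)) = p)"

text \<open>Left H-comodule P, lco(p) = p_(-1) (x) p_(0).\<close>
definition left_comodule :: "('k::field \<Rightarrow> 'h::ab_group_add \<Rightarrow> 'h) \<Rightarrow> ('h \<Rightarrow> ('h \<times> 'h) list)
   \<Rightarrow> ('h \<Rightarrow> 'k) \<Rightarrow> ('k \<Rightarrow> 'p::ab_group_add \<Rightarrow> 'p) \<Rightarrow> ('p \<Rightarrow> ('h \<times> 'p) list) \<Rightarrow> bool" where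
  "left_comodule sH \<Delta> \<epsilon> sP lco \<longleftrightarrow> vector_space sP \<and> tlinear sP sH sP lco \<and>
     (\<forall>p. teq3 sH sH sP
        (concat (map (\<lambda>(h, p0). map (\<lambda>(x, y). (x, y, p0)) (\<Delta> h)) (lco p)))
        (concat (map (\<lambda>(h, p0). map (\<lambda>(x, y). (h, x, y)) (lco p0)) (lco p)))) \<and>
     (\<forall>p. sum_list (map (\<lambda>(h, p0). sP (\<epsilon> h) p0) (lco p)) = p)"

definition entwined_module :: "('k::field \<Rightarrow> 'p::ab_group_add \<Rightarrow> 'p) \<Rightarrow> ('p \<Rightarrow> 'p \<Rightarrow> 'p)
   \<Rightarrow> ('k \<Rightarrow> 'c::ab_group_add \<Rightarrow> 'c) \<Rightarrow> ('c \<Rightarrow> ('c \<times> 'c) list) \<Rightarrow> ('c \<Rightarrow> 'k)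
   \<Rightarrow> ('c \<Rightarrow> 'p \<Rightarrow> ('p \<times> 'c) list) \<Rightarrow> ('p \<Rightarrow> ('p \<times> 'c) list) \<Rightarrow> bool" where
  "entwined_module sP mP sC \<Delta> \<epsilon> \<psi> \<rho> \<longleftrightarrow> right_comodule sP sC \<Delta> \<epsilon> \<rho> \<and>
     (\<forall>p q. teq2 sP sC (\<rho> (mP p q))
        (concat (map (\<lambda>(p0, p1). map (\<lambda>(q', c'). (mP p0 q', c')) (\<psi> p1 q)) (\<rho> p))))"

definition coinv :: "('k::field \<Rightarrow> 'p::ab_group_add \<Rightarrow> 'p) \<Rightarrow> ('p \<Rightarrow> 'p \<Rightarrow> 'p)
   \<Rightarrow> ('k \<Rightarrow> 'c::ab_group_add \<Rightarrow> 'c) \<Rightarrow> ('p \<Rightarrow> ('p \<times> 'c) list) \<Rightarrow> 'p set" where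
  "coinv sP mP sC \<rho> = {b. \<forall>p. teq2 sP sC (\<rho> (mP b p)) (map (\<lambda>(x, y). (mP b x, y)) (\<rho> p))}"

definition bicomodule :: "('k::field \<Rightarrow> 'h::ab_group_add \<Rightarrow> 'h) \<Rightarrow> ('h \<Rightarrow> ('h \<times> 'h) list)
   \<Rightarrow> ('h \<Rightarrow> 'k) \<Rightarrow> ('k \<Rightarrow> 'p::ab_group_add \<Rightarrow> 'p) \<Rightarrow> ('k \<Rightarrow> 'c::ab_group_add \<Rightarrow> 'c)
   \<Rightarrow> ('c \<Rightarrow> ('c \<times> 'c) list) \<Rightarrow> ('c \<Rightarrow> 'k)
   \<Rightarrow> ('p \<Rightarrow> ('h \<times> 'p) list) \<Rightarrow> ('p \<Rightarrow> ('p \<times> 'c) list) \<Rightarrow> bool" where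
  "bicomodule sH \<Delta>H \<epsilon>H sP sC \<Delta>C \<epsilon>C lco \<rho> \<longleftrightarrow>
     left_comodule sH \<Delta>H \<epsilon>H sP lco \<and> right_comodule sP sC \<Delta>C \<epsilon>C \<rho> \<and>
     (\<forall>p. teq3 sH sP sC
        (concat (map (\<lambda>(h, p0). map (\<lambda>(x, y). (h, x, y)) (\<rho> p0)) (lco p)))
        (concat (map (\<lambda>(p0, c). map (\<lambda>(h, x). (h, x, c)) (lco p0)) (\<rho> p))))"

definition comodule_algebra :: "('k::field \<Rightarrow> 'h::ab_group_add \<Rightarrow> 'h) \<Rightarrow> ('h \<Rightarrow> 'h \<Rightarrow> 'h) \<Rightarrow> 'h
   \<Rightarrow> ('h \<Rightarrow> ('h \<times> 'h) list) \<Rightarrow> ('h \<Rightarrow> 'k) \<Rightarrow> ('k \<Rightarrow> 'p::ab_group_add \<Rightarrow> 'p) \<Rightarrow> ('p \<Rightarrow> 'p \<Rightarrow> 'p) \<Rightarrow> 'p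
   \<Rightarrow> ('p \<Rightarrow> ('h \<times> 'p) list) \<Rightarrow> bool" where
  "comodule_algebra sH mH uH \<Delta>H \<epsilon>H sP mP uP lco \<longleftrightarrow>
     algebra sP mP uP \<and> left_comodule sH \<Delta>H \<epsilon>H sP lco \<and>
     (\<forall>p q. teq2 sH sP (lco (mP p q))
        (concat (map (\<lambda>(h, p0). map (\<lambda>(h', q0). (mH h h', mP p0 q0)) (lco q)) (lco p)))) \<and>
     teq2 sH sP (lco uP) [(uH, uP)]"

text \<open>Colifting of the translation map: tau(c) = c^[1] (x) c^[2] in P (x) P.\<close>
definition colifting :: "('k::field \<Rightarrow> 'p::ab_group_add \<Rightarrow> 'p) \<Rightarrow> ('p \<Rightarrow> 'p \<Rightarrow> 'p) \<Rightarrow> 'p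
   \<Rightarrow> ('k \<Rightarrow> 'c::ab_group_add \<Rightarrow> 'c) \<Rightarrow> ('p \<Rightarrow> ('p \<times> 'c) list) \<Rightarrow> ('c \<Rightarrow> ('p \<times> 'p) list) \<Rightarrow> bool" where
  "colifting sP mP uP sC \<rho> \<tau> \<longleftrightarrow> tlinear sC sP sP \<tau> \<and>
     (\<forall>c. teq2 sP sC
        (concat (map (\<lambda>(x, y). map (\<lambda>(y0, y1). (mP x y0, y1)) (\<rho> y)) (\<tau> c))) [(uP, c)])"

text \<open>Equality in P (x)_B P: agreement on all B-balanced bilinear forms.\<close>
definition teqB :: "('k::field \<Rightarrow> 'p::ab_group_add \<Rightarrow> 'p) \<Rightarrow> ('p \<Rightarrow> 'p \<Rightarrow> 'p) \<Rightarrow> 'p set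
   \<Rightarrow> ('p \<times> 'p) list \<Rightarrow> ('p \<times> 'p) list \<Rightarrow> bool" where
  "teqB sP mP B xs ys \<longleftrightarrow> (\<forall>\<Phi>. bilinear_map sP sP (*) \<Phi> \<and>
      (\<forall>b\<in>B. \<forall>p q. \<Phi> (mP p b) q = \<Phi> p (mP b q)) \<longrightarrow> tsum2 \<Phi> xs = tsum2 \<Phi> ys)"

definition can_map :: "('p \<Rightarrow> 'p \<Rightarrow> 'p) \<Rightarrow> ('p \<Rightarrow> ('p \<times> 'c) list) \<Rightarrow> ('p \<times> 'p) list \<Rightarrow> ('p \<times> 'c) list" where
  "can_map mP \<rho> xs = concat (map (\<lambda>(p, q). map (\<lambda>(q0, q1). (mP p q0, q1)) (\<rho> q)) xs)"

definition coalgebra_galois :: "('k::field \<Rightarrow> 'p::ab_group_add \<Rightarrow> 'p) \<Rightarrow> ('p \<Rightarrow> 'p \<Rightarrow> 'p) \<Rightarrow> 'p set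
   \<Rightarrow> ('k \<Rightarrow> 'c::ab_group_add \<Rightarrow> 'c) \<Rightarrow> ('p \<Rightarrow> ('p \<times> 'c) list) \<Rightarrow> bool" where
  "coalgebra_galois sP mP B sC \<rho> \<longleftrightarrow>
     (\<forall>z. \<exists>xs. teq2 sP sC (can_map mP \<rho> xs) z) \<and>
     (\<forall>xs ys. teq2 sP sC (can_map mP \<rho> xs) (can_map mP \<rho> ys) \<longrightarrow> teqB sP mP B xs ys)"

definition left_coinv :: "('k::field \<Rightarrow> 'h::ab_group_add \<Rightarrow> 'h) \<Rightarrow> 'h \<Rightarrow> ('k \<Rightarrow> 'p::ab_group_add \<Rightarrow> 'p)
   \<Rightarrow> ('p \<Rightarrow> ('h \<times> 'p) list) \<Rightarrow> 'p set" where
  "left_coinv sH uH sP lco = {p. teq2 sH sP (lco p) [(uH, p)]}"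

end

theory Submission
  imports Defs
begin

(* Let c^[1] \<otimes> c^[2] be a preimage of 1 \<otimes> c under can.  The entwined-module axiom gives
   psi(c \<otimes> p) = c^[1] rho(c^[2] p).  The left H-coaction is multiplicative and commutes with
   rho, so applying it to psi(c \<otimes> p) gives
   c^[1]_(-1) c^[2]_(-1) p_(-1) \<otimes> c^[1]_(0) rho(c^[2]_(0) p_(0)),
   which is p_(-1) \<otimes> psi(c \<otimes> p_(0)) as soon as c^[1] \<otimes> c^[2] is coinvariant under the
   diagonal coaction.  The expression is B-balanced in c^[1], c^[2], so coinvariance in
   P \<otimes>_B P suffices.  In case (a) coinvariance is the hypothesis on the colifting; in case (b)
   it holds because can is H-colinear and injective on P \<otimes>_B P, and 1 \<otimes> c is coinvariant. *)

section \<open>Sums over representing lists\<close>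

lemma tsum2_Nil [simp]: "tsum2 f [] = 0"
  by (simp add: tsum2_def)

lemma tsum2_Cons [simp]: "tsum2 f ((a, b) # xs) = f a b + tsum2 f xs"
  by (simp add: tsum2_def)

lemma tsum2_append [simp]: "tsum2 f (xs @ ys) = tsum2 f xs + tsum2 f ys"
  by (simp add: tsum2_def)

lemma tsum3_Nil [simp]: "tsum3 f [] = 0"
  by (simp add: tsum3_def)

lemma tsum3_Cons [simp]: "tsum3 f ((a, b, c) # xs) = f a b c + tsum3 f xs"
  by (simp add: tsum3_def)

lemma tsum3_append [simp]: "tsum3 f (xs @ ys) = tsum3 f xs + tsum3 f ys"
  by (simp add: tsum3_def)

lemma tsum2_concat_map [simp]:
  "tsum2 f (concat (map (case_prod G) xs)) = tsum2 (\<lambda>a b. tsum2 f (G a b)) xs"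
  by (induction xs) auto

lemma tsum3_concat_map [simp]:
  "tsum3 f (concat (map (case_prod G) xs)) = tsum2 (\<lambda>a b. tsum3 f (G a b)) xs"
  by (induction xs) auto

lemma tsum2_map_prod [simp]:
  "tsum2 f (map (\<lambda>(a, b). (g a b, h a b)) xs) = tsum2 (\<lambda>a b. f (g a b) (h a b)) xs"
  by (induction xs) auto

lemma tsum3_map_prod [simp]:
  "tsum3 f (map (\<lambda>(a, b). (g a b, h a b, k a b)) xs) = tsum2 (\<lambda>a b. f (g a b) (h a b) (k a b)) xs"
  by (induction xs) auto

lemma tsum3_map_Pair [simp]: "tsum3 f (map (Pair h) xs) = tsum2 (f h) xs"
  by (induction xs) auto

lemma tsum2_add: "tsum2 (\<lambda>a b. f a b + g a b) xs = tsum2 f xs + tsum2 g xs"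
  by (induction xs) (auto simp: algebra_simps)

lemma tsum2_zero [simp]: "tsum2 (\<lambda>a b. 0) xs = 0"
  by (induction xs) auto

lemma tsum2_swap:
  "tsum2 (\<lambda>a b. tsum2 (F a b) ys) xs = tsum2 (\<lambda>c d. tsum2 (\<lambda>a b. F a b c d) xs) ys"
  by (induction xs) (auto simp: tsum2_add)

lemma tsum2_cong: "(\<And>a b. (a, b) \<in> set xs \<Longrightarrow> f a b = g a b) \<Longrightarrow> tsum2 f xs = tsum2 g xs"
  by (induction xs) auto

lemma tsum2_can_map [simp]:
  "tsum2 \<Psi> (can_map m \<rho> xs) = tsum2 (\<lambda>x y. tsum2 (\<lambda>y0 y1. \<Psi> (m x y0) y1) (\<rho> y)) xs"
  by (simp add: can_map_def)

section \<open>Multilinear forms\<close>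

text \<open>Linearity without the vector-space side conditions of \<^const>\<open>Vector_Spaces.linear\<close>,
  so that linearity facts compose freely.\<close>

definition lin :: "('k::field \<Rightarrow> 'a::ab_group_add \<Rightarrow> 'a) \<Rightarrow> ('k \<Rightarrow> 'b::ab_group_add \<Rightarrow> 'b)
    \<Rightarrow> ('a \<Rightarrow> 'b) \<Rightarrow> bool" where
  "lin s1 s2 f \<longleftrightarrow> (\<forall>x y. f (x + y) = f x + f y) \<and> (\<forall>a x. f (s1 a x) = s2 a (f x))"

abbreviation lin_form :: "('k::field \<Rightarrow> 'a::ab_group_add \<Rightarrow> 'a) \<Rightarrow> ('a \<Rightarrow> 'k) \<Rightarrow> bool" where
  "lin_form s f \<equiv> lin s (*) f"

definition bilin_form :: "('k::field \<Rightarrow> 'a::ab_group_add \<Rightarrow> 'a) \<Rightarrow> ('k \<Rightarrow> 'b::ab_group_add \<Rightarrow> 'b)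
    \<Rightarrow> ('a \<Rightarrow> 'b \<Rightarrow> 'k) \<Rightarrow> bool" where
  "bilin_form sA sB F \<longleftrightarrow> (\<forall>a. lin_form sB (F a)) \<and> (\<forall>b. lin_form sA (\<lambda>a. F a b))"

definition trilin_form :: "('k::field \<Rightarrow> 'a::ab_group_add \<Rightarrow> 'a) \<Rightarrow> ('k \<Rightarrow> 'b::ab_group_add \<Rightarrow> 'b)
    \<Rightarrow> ('k \<Rightarrow> 'c::ab_group_add \<Rightarrow> 'c) \<Rightarrow> ('a \<Rightarrow> 'b \<Rightarrow> 'c \<Rightarrow> 'k) \<Rightarrow> bool" where
  "trilin_form sA sB sC F \<longleftrightarrow> (\<forall>b c. lin_form sA (\<lambda>a. F a b c)) \<and>
     (\<forall>a c. lin_form sB (\<lambda>b. F a b c)) \<and> (\<forall>a b. lin_form sC (F a b))"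

definition balanced :: "('p \<Rightarrow> 'p \<Rightarrow> 'p) \<Rightarrow> 'p set \<Rightarrow> ('p \<Rightarrow> 'p \<Rightarrow> 'k) \<Rightarrow> bool" where
  "balanced m B g \<longleftrightarrow> (\<forall>b\<in>B. \<forall>x y. g (m x b) y = g x (m b y))"

lemma vector_space_field: "vector_space ((*) :: 'k::field \<Rightarrow> 'k \<Rightarrow> 'k)"
  by unfold_locales (auto simp: algebra_simps)

lemma linear_iff_lin:
  "vector_space s1 \<Longrightarrow> vector_space s2 \<Longrightarrow> Vector_Spaces.linear s1 s2 f \<longleftrightarrow> lin s1 s2 f"
  by (auto simp: Vector_Spaces.linear_iff lin_def)

lemma linear_iff_lin_form: "vector_space s \<Longrightarrow> Vector_Spaces.linear s (*) f \<longleftrightarrow> lin_form s f"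
  using linear_iff_lin vector_space_field by blast

lemma bilinear_map_iff_bilin_form:
  "vector_space sA \<Longrightarrow> vector_space sB \<Longrightarrow> bilinear_map sA sB (*) F \<longleftrightarrow> bilin_form sA sB F"
  by (simp add: bilinear_map_def bilin_form_def linear_iff_lin_form)

lemma trilinear_form_iff_trilin_form:
  "vector_space sA \<Longrightarrow> vector_space sB \<Longrightarrow> vector_space sC \<Longrightarrow>
    trilinear_form sA sB sC F \<longleftrightarrow> trilin_form sA sB sC F"
  by (simp add: trilinear_form_def trilin_form_def linear_iff_lin_form)

lemma bilin_formI:
  "(\<And>a. lin_form sB (F a)) \<Longrightarrow> (\<And>b. lin_form sA (\<lambda>a. F a b)) \<Longrightarrow> bilin_form sA sB F"
  by (simp add: bilin_form_def)

lemma trilin_formI: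
  "(\<And>b c. lin_form sA (\<lambda>a. F a b c)) \<Longrightarrow> (\<And>a c. lin_form sB (\<lambda>b. F a b c)) \<Longrightarrow>
    (\<And>a b. lin_form sC (F a b)) \<Longrightarrow> trilin_form sA sB sC F"
  by (simp add: trilin_form_def)

lemma lin_id: "lin s s (\<lambda>x. x)"
  by (simp add: lin_def)

lemma lin_comp: "lin s2 s3 f \<Longrightarrow> lin s1 s2 g \<Longrightarrow> lin s1 s3 (\<lambda>x. f (g x))"
  by (simp add: lin_def)

lemma lin_form_tsum2: "(\<And>a b. lin_form s (\<lambda>x. F x a b)) \<Longrightarrow> lin_form s (\<lambda>x. tsum2 (F x) xs)"
  unfolding lin_def by (induction xs) (auto simp: algebra_simps)

lemma bilin_form_comp_left: "bilin_form sA sB F \<Longrightarrow> lin s sA g \<Longrightarrow> lin_form s (\<lambda>x. F (g x) b)"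
  unfolding bilin_form_def using lin_comp[of sA "(*)" "\<lambda>a. F a b"] by blast

lemma bilin_form_comp_right: "bilin_form sA sB F \<Longrightarrow> lin s sB g \<Longrightarrow> lin_form s (\<lambda>x. F a (g x))"
  unfolding bilin_form_def using lin_comp[of sB "(*)" "F a"] by blast

lemma trilin_form_comp1: "trilin_form sA sB sC F \<Longrightarrow> lin s sA g \<Longrightarrow> lin_form s (\<lambda>x. F (g x) b c)"
  unfolding trilin_form_def using lin_comp[of sA "(*)" "\<lambda>a. F a b c"] by blast

lemma trilin_form_comp2: "trilin_form sA sB sC F \<Longrightarrow> lin s sB g \<Longrightarrow> lin_form s (\<lambda>x. F a (g x) c)"
  unfolding trilin_form_def using lin_comp[of sB "(*)" "\<lambda>b. F a b c"] by blast

lemma trilin_form_comp3: "trilin_form sA sB sC F \<Longrightarrow> lin s sC g \<Longrightarrow> lin_form s (\<lambda>x. F a b (g x))"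
  unfolding trilin_form_def using lin_comp[of sC "(*)" "F a b"] by blast

lemma teq2_tsum2:
  "teq2 sA sB xs ys \<Longrightarrow> vector_space sA \<Longrightarrow> vector_space sB \<Longrightarrow> bilin_form sA sB F \<Longrightarrow>
    tsum2 F xs = tsum2 F ys"
  by (simp add: teq2_def bilinear_map_iff_bilin_form)

lemma teq3_tsum3:
  "teq3 sA sB sC xs ys \<Longrightarrow> vector_space sA \<Longrightarrow> vector_space sB \<Longrightarrow> vector_space sC \<Longrightarrow>
    trilin_form sA sB sC F \<Longrightarrow> tsum3 F xs = tsum3 F ys"
  by (simp add: teq3_def trilinear_form_iff_trilin_form)

lemma teq2I:
  "vector_space sA \<Longrightarrow> vector_space sB \<Longrightarrow>
    (\<And>\<Psi>. bilin_form sA sB \<Psi> \<Longrightarrow> tsum2 \<Psi> xs = tsum2 \<Psi> ys) \<Longrightarrow> teq2 sA sB xs ys"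
  by (simp add: teq2_def bilinear_map_iff_bilin_form)

lemma teq2_refl: "teq2 sA sB xs xs"
  by (simp add: teq2_def)

lemma teq2_sym: "teq2 sA sB xs ys \<Longrightarrow> teq2 sA sB ys xs"
  by (simp add: teq2_def)

lemma teq2_trans: "teq2 sA sB xs ys \<Longrightarrow> teq2 sA sB ys zs \<Longrightarrow> teq2 sA sB xs zs"
  by (simp add: teq2_def)

definition tscale :: "('k \<Rightarrow> 'a \<Rightarrow> 'a) \<Rightarrow> 'k \<Rightarrow> ('a \<times> 'b) list \<Rightarrow> ('a \<times> 'b) list" where
  "tscale s a zs = map (\<lambda>(u, v). (s a u, v)) zs"

lemma tsum2_tscale:
  "(\<And>v. lin_form sA (\<lambda>u. F u v)) \<Longrightarrow> tsum2 F (tscale sA a zs) = a * tsum2 F zs"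
  unfolding tscale_def lin_def by (induction zs) (auto simp: algebra_simps)

lemma bilin_form_if_well_defined:
  assumes vs: "vector_space sA" "vector_space sB"
    and well_defined: "\<And>zs zs'. teq2 sA sB zs zs' \<Longrightarrow> tsum2 G zs = tsum2 G zs'"
    and homogeneous: "\<And>a zs. tsum2 G (tscale sA a zs) = a * tsum2 G zs"
  shows "bilin_form sA sB G"
proof (rule bilin_formI)
  have add_right: "teq2 sA sB [(x, d + e)] [(x, d), (x, e)]" for x d e
    by (rule teq2I[OF vs]) (simp add: bilin_form_def lin_def)
  have add_left: "teq2 sA sB [(x + y, d)] [(x, d), (y, d)]" for x y d
    by (rule teq2I[OF vs]) (simp add: bilin_form_def lin_def)
  have scale_right: "teq2 sA sB [(x, sB a d)] [(sA a x, d)]" for x d a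
    by (rule teq2I[OF vs]) (simp add: bilin_form_def lin_def)
  have scale_left: "G (sA a x) d = a * G x d" for a x d
    using homogeneous[of a "[(x, d)]"] by (simp add: tscale_def)
  show "lin_form sB (G x)" for x
    unfolding lin_def using well_defined[OF add_right] well_defined[OF scale_right] scale_left
    by simp
  show "lin_form sA (\<lambda>x. G x d)" for d
    unfolding lin_def using well_defined[OF add_left] scale_left by simp
qed

lemma algebra_lin_mult:
  assumes "algebra s m u"
  shows "lin s s (\<lambda>x. m x z)" "lin s s (m z)"
  using assms by (auto simp: algebra_def bilinear_map_def linear_iff_lin)

section \<open>Entwined comodule algebras\<close>

locale entwined_comodule_algebra =
  fixes sH :: "'k::field \<Rightarrow> 'h::ab_group_add \<Rightarrow> 'h"
    and mH :: "'h \<Rightarrow> 'h \<Rightarrow> 'h" and uH :: 'h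
    and \<Delta>H :: "'h \<Rightarrow> ('h \<times> 'h) list" and \<epsilon>H :: "'h \<Rightarrow> 'k"
    and sC :: "'k \<Rightarrow> 'c::ab_group_add \<Rightarrow> 'c"
    and \<Delta>C :: "'c \<Rightarrow> ('c \<times> 'c) list" and \<epsilon>C :: "'c \<Rightarrow> 'k"
    and sP :: "'k \<Rightarrow> 'p::ab_group_add \<Rightarrow> 'p"
    and mP :: "'p \<Rightarrow> 'p \<Rightarrow> 'p" and uP :: 'p
    and \<psi> :: "'c \<Rightarrow> 'p \<Rightarrow> ('p \<times> 'c) list"
    and \<rho> :: "'p \<Rightarrow> ('p \<times> 'c) list"
    and lco :: "'p \<Rightarrow> ('h \<times> 'p) list"
  assumes algebra_H: "algebra sH mH uH"
    and entwining: "entwining sP mP uP sC \<Delta>C \<epsilon>C \<psi>"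
    and entwined_module: "entwined_module sP mP sC \<Delta>C \<epsilon>C \<psi> \<rho>"
    and bicomodule: "bicomodule sH \<Delta>H \<epsilon>H sP sC \<Delta>C \<epsilon>C lco \<rho>"
    and comodule_algebra: "comodule_algebra sH mH uH \<Delta>H \<epsilon>H sP mP uP lco"
begin

lemma algebra_P: "algebra sP mP uP"
  using entwining by (simp add: entwining_def)

lemma vector_space_H: "vector_space sH"
  using algebra_H by (simp add: algebra_def)

lemma vector_space_P: "vector_space sP"
  using algebra_P by (simp add: algebra_def)

lemma vector_space_C: "vector_space sC"
  using entwining by (simp add: entwining_def coalgebra_def)

lemma mH_assoc: "mH (mH x y) z = mH x (mH y z)"
  using algebra_H by (simp add: algebra_def)

lemma mP_assoc: "mP (mP x y) z = mP x (mP y z)"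
  using algebra_P by (simp add: algebra_def)

lemma mH_unit [simp]: "mH uH x = x" "mH x uH = x"
  using algebra_H by (simp_all add: algebra_def)

lemma mP_unit [simp]: "mP uP x = x" "mP x uP = x"
  using algebra_P by (simp_all add: algebra_def)

lemma lin_mP_left: "lin s sP g \<Longrightarrow> lin s sP (\<lambda>x. mP (g x) z)"
  using lin_comp[OF algebra_lin_mult(1)[OF algebra_P]] by blast

lemma lin_mP_right: "lin s sP g \<Longrightarrow> lin s sP (\<lambda>x. mP z (g x))"
  using lin_comp[OF algebra_lin_mult(2)[OF algebra_P]] by blast

lemma lin_mH_left: "lin s sH g \<Longrightarrow> lin s sH (\<lambda>x. mH (g x) z)"
  using lin_comp[OF algebra_lin_mult(1)[OF algebra_H]] by blast

lemma lin_mH_right: "lin s sH g \<Longrightarrow> lin s sH (\<lambda>x. mH z (g x))"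
  using lin_comp[OF algebra_lin_mult(2)[OF algebra_H]] by blast

lemma lin_form_lco: "bilin_form sH sP G \<Longrightarrow> lin s sP g \<Longrightarrow> lin_form s (\<lambda>x. tsum2 G (lco (g x)))"
  using bicomodule vector_space_H vector_space_P lin_comp[of sP "(*)" "\<lambda>x. tsum2 G (lco x)" s g]
  by (simp add: bicomodule_def left_comodule_def tlinear_def bilinear_map_iff_bilin_form
      linear_iff_lin_form)

lemma lin_form_rho: "bilin_form sP sC G \<Longrightarrow> lin s sP g \<Longrightarrow> lin_form s (\<lambda>x. tsum2 G (\<rho> (g x)))"
  using bicomodule vector_space_C vector_space_P lin_comp[of sP "(*)" "\<lambda>x. tsum2 G (\<rho> x)" s g]
  by (simp add: bicomodule_def right_comodule_def tlinear_def bilinear_map_iff_bilin_form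
      linear_iff_lin_form)

lemma bilin_form_psi: "bilin_form sP sC G \<Longrightarrow> bilin_form sC sP (\<lambda>c p. tsum2 G (\<psi> c p))"
  using entwining vector_space_C vector_space_P
  by (simp add: entwining_def tbilinear_def bilinear_map_iff_bilin_form)

lemma lin_form_psi_left: "bilin_form sP sC G \<Longrightarrow> lin s sC g \<Longrightarrow> lin_form s (\<lambda>x. tsum2 G (\<psi> (g x) p))"
  using bilin_form_comp_left[OF bilin_form_psi] by blast

lemma lin_form_psi_right: "bilin_form sP sC G \<Longrightarrow> lin s sP g \<Longrightarrow> lin_form s (\<lambda>x. tsum2 G (\<psi> c (g x)))"
  using bilin_form_comp_right[OF bilin_form_psi] by blast

lemmas lin_intros = lin_form_tsum2 lin_form_lco lin_form_rho lin_form_psi_left lin_form_psi_right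
  lin_mP_left lin_mP_right lin_mH_left lin_mH_right lin_id bilin_formI trilin_formI

lemma lco_mult:
  "bilin_form sH sP F \<Longrightarrow>
    tsum2 F (lco (mP p q)) = tsum2 (\<lambda>h p0. tsum2 (\<lambda>h' q0. F (mH h h') (mP p0 q0)) (lco q)) (lco p)"
  using comodule_algebra unfolding comodule_algebra_def
  by (force dest: teq2_tsum2[OF _ vector_space_H vector_space_P])

lemma lco_unit: "bilin_form sH sP F \<Longrightarrow> tsum2 F (lco uP) = F uH uP"
  using comodule_algebra unfolding comodule_algebra_def
  by (force dest: teq2_tsum2[OF _ vector_space_H vector_space_P])

lemma lco_rho_commute:
  "trilin_form sH sP sC F \<Longrightarrow>
    tsum2 (\<lambda>h p0. tsum2 (F h) (\<rho> p0)) (lco p) = tsum2 (\<lambda>p0 c. tsum2 (\<lambda>h x. F h x c) (lco p0)) (\<rho> p)"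
  using bicomodule unfolding bicomodule_def
  by (force dest: teq3_tsum3[OF _ vector_space_H vector_space_P vector_space_C])

lemma rho_mult:
  "bilin_form sP sC F \<Longrightarrow>
    tsum2 F (\<rho> (mP p q)) = tsum2 (\<lambda>p0 p1. tsum2 (\<lambda>q' c'. F (mP p0 q') c') (\<psi> p1 q)) (\<rho> p)"
  using entwined_module unfolding entwined_module_def
  by (force dest: teq2_tsum2[OF _ vector_space_P vector_space_C])

lemma rho_coinv_mult:
  "b \<in> coinv sP mP sC \<rho> \<Longrightarrow> bilin_form sP sC F \<Longrightarrow>
    tsum2 F (\<rho> (mP b p)) = tsum2 (\<lambda>x. F (mP b x)) (\<rho> p)"
  unfolding coinv_def by (force dest: teq2_tsum2[OF _ vector_space_P vector_space_C])

definition translation :: "'c \<Rightarrow> ('p \<times> 'p) list \<Rightarrow> bool" where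
  "translation c xs \<longleftrightarrow> teq2 sP sC (can_map mP \<rho> xs) [(uP, c)]"

text \<open>\<open>xs\<close> is coinvariant in \<open>P \<otimes>\<^sub>B P\<close> under the diagonal coaction
  \<open>x \<otimes> y \<mapsto> x_(-1) y_(-1) \<otimes> x_(0) \<otimes> y_(0)\<close>.\<close>

definition coinvariant_over :: "'p set \<Rightarrow> ('p \<times> 'p) list \<Rightarrow> bool" where
  "coinvariant_over B xs \<longleftrightarrow>
     (\<forall>\<Gamma>. trilin_form sH sP sP \<Gamma> \<and> (\<forall>h. balanced mP B (\<Gamma> h)) \<longrightarrow>
        tsum2 (\<lambda>x y. tsum2 (\<lambda>hx x0. tsum2 (\<lambda>hy y0. \<Gamma> (mH hx hy) x0 y0) (lco y)) (lco x)) xs =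
        tsum2 (\<Gamma> uH) xs)"

lemma translation_tsum2:
  "translation c xs \<Longrightarrow> bilin_form sP sC \<Psi> \<Longrightarrow>
    tsum2 (\<lambda>x y. tsum2 (\<lambda>y0 y1. \<Psi> (mP x y0) y1) (\<rho> y)) xs = \<Psi> uP c"
  unfolding translation_def using teq2_tsum2[OF _ vector_space_P vector_space_C] by fastforce

text \<open>Writing \<open>xs = c^[1] \<otimes> c^[2]\<close>: \<open>\<psi>(c \<otimes> p) = c^[1] \<rho>(c^[2] p)\<close>, by the entwined-module
  axiom for \<open>\<rho>(c^[2] p)\<close> and \<open>can(xs) = 1 \<otimes> c\<close>.\<close>

lemma psi_via_translation:
  assumes "translation c xs" and \<Psi>: "bilin_form sP sC \<Psi>"
  shows "tsum2 \<Psi> (\<psi> c p) = tsum2 (\<lambda>x y. tsum2 (\<lambda>q0. \<Psi> (mP x q0)) (\<rho> (mP y p))) xs"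
proof -
  note lin_\<Psi> = lin_intros bilin_form_comp_left[OF \<Psi>] bilin_form_comp_right[OF \<Psi>]
  have "tsum2 (\<lambda>x y. tsum2 (\<lambda>q0. \<Psi> (mP x q0)) (\<rho> (mP y p))) xs =
      tsum2 (\<lambda>x y. tsum2 (\<lambda>y0 y1. tsum2 (\<lambda>p'. \<Psi> (mP (mP x y0) p')) (\<psi> y1 p)) (\<rho> y)) xs"
    by (intro tsum2_cong, subst rho_mult) (auto intro!: lin_\<Psi> simp: mP_assoc)
  also have "\<dots> = tsum2 (\<lambda>p'. \<Psi> (mP uP p')) (\<psi> c p)"
    by (rule translation_tsum2[OF assms(1), of "\<lambda>w d. tsum2 (\<lambda>p'. \<Psi> (mP w p')) (\<psi> d p)"])
      (auto intro!: lin_\<Psi>)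
  finally show ?thesis
    by simp
qed

text \<open>The form \<open>(h, x, y) \<mapsto> \<Phi>(h p_(-1), x (y p_(0))_(0), (y p_(0))_(1))\<close>: paired with a
  translation of \<open>c\<close> under the diagonal, resp. the trivial coaction, it yields the two sides
  of the commutation of \<open>\<psi>\<close> with the coaction.\<close>

definition psi_lco_form :: "('h \<Rightarrow> 'p \<Rightarrow> 'c \<Rightarrow> 'k) \<Rightarrow> 'p \<Rightarrow> 'h \<Rightarrow> 'p \<Rightarrow> 'p \<Rightarrow> 'k" where
  "psi_lco_form \<Phi> p h x y =
     tsum2 (\<lambda>hp p0. tsum2 (\<lambda>z. \<Phi> (mH h hp) (mP x z)) (\<rho> (mP y p0))) (lco p)"

lemma trilin_form_psi_lco_form:
  assumes \<Phi>: "trilin_form sH sP sC \<Phi>"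
  shows "trilin_form sH sP sP (psi_lco_form \<Phi> p)"
  unfolding psi_lco_form_def
  by (auto intro!: lin_intros trilin_form_comp1[OF \<Phi>] trilin_form_comp2[OF \<Phi>]
      trilin_form_comp3[OF \<Phi>])

lemma balanced_psi_lco_form:
  assumes \<Phi>: "trilin_form sH sP sC \<Phi>"
  shows "balanced mP (coinv sP mP sC \<rho>) (psi_lco_form \<Phi> p h)"
  unfolding balanced_def psi_lco_form_def
  by (intro ballI allI tsum2_cong, simp only: mP_assoc, subst rho_coinv_mult, assumption)
    (auto intro!: lin_intros trilin_form_comp2[OF \<Phi>] trilin_form_comp3[OF \<Phi>] simp: mP_assoc)

lemma lco_psi_via_translation:
  assumes xs: "translation c xs" and \<Phi>: "trilin_form sH sP sC \<Phi>"
  shows "tsum2 (\<lambda>p' c'. tsum2 (\<lambda>h x. \<Phi> h x c') (lco p')) (\<psi> c p) =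
    tsum2 (\<lambda>x y. tsum2 (\<lambda>hx x0. tsum2 (\<lambda>hy y0. psi_lco_form \<Phi> p (mH hx hy) x0 y0) (lco y)) (lco x)) xs"
proof -
  note lin_\<Phi> = lin_intros trilin_form_comp1[OF \<Phi>] trilin_form_comp2[OF \<Phi>] trilin_form_comp3[OF \<Phi>]
  have "tsum2 (\<lambda>p' c'. tsum2 (\<lambda>h x. \<Phi> h x c') (lco p')) (\<psi> c p) =
      tsum2 (\<lambda>x y. tsum2 (\<lambda>q0 q1. tsum2 (\<lambda>h z. \<Phi> h z q1) (lco (mP x q0))) (\<rho> (mP y p))) xs"
    by (rule psi_via_translation[OF xs]) (auto intro!: lin_\<Phi>)
  also have "\<dots> = tsum2 (\<lambda>x y. tsum2 (\<lambda>q0 q1. tsum2 (\<lambda>hx x0.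
      tsum2 (\<lambda>hq q00. \<Phi> (mH hx hq) (mP x0 q00) q1) (lco q0)) (lco x)) (\<rho> (mP y p))) xs"
    by (intro tsum2_cong, subst lco_mult) (auto intro!: lin_\<Phi>)
  also have "\<dots> = tsum2 (\<lambda>x y. tsum2 (\<lambda>hx x0. tsum2 (\<lambda>q0 q1.
      tsum2 (\<lambda>hq q00. \<Phi> (mH hx hq) (mP x0 q00) q1) (lco q0)) (\<rho> (mP y p))) (lco x)) xs"
    by (intro tsum2_cong) (rule tsum2_swap)
  also have "\<dots> = tsum2 (\<lambda>x y. tsum2 (\<lambda>hx x0. tsum2 (\<lambda>hw w0.
      tsum2 (\<lambda>z. \<Phi> (mH hx hw) (mP x0 z)) (\<rho> w0)) (lco (mP y p))) (lco x)) xs"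
    by (intro tsum2_cong lco_rho_commute[symmetric]) (auto intro!: lin_\<Phi>)
  also have "\<dots> = tsum2 (\<lambda>x y. tsum2 (\<lambda>hx x0.
      tsum2 (\<lambda>hy y0. psi_lco_form \<Phi> p (mH hx hy) x0 y0) (lco y)) (lco x)) xs"
    unfolding psi_lco_form_def
    by (intro tsum2_cong, subst lco_mult) (auto intro!: lin_\<Phi> simp: mH_assoc)
  finally show ?thesis .
qed

lemma psi_lco_via_translation:
  assumes xs: "translation c xs" and \<Phi>: "trilin_form sH sP sC \<Phi>"
  shows "tsum2 (psi_lco_form \<Phi> p uH) xs = tsum2 (\<lambda>h p0. tsum2 (\<Phi> h) (\<psi> c p0)) (lco p)"
proof -
  have "tsum2 (psi_lco_form \<Phi> p uH) xs =
      tsum2 (\<lambda>h p0. tsum2 (\<lambda>x y. tsum2 (\<lambda>z. \<Phi> h (mP x z)) (\<rho> (mP y p0))) xs) (lco p)"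
    unfolding psi_lco_form_def by (simp add: tsum2_swap[of _ "lco p"])
  also have "\<dots> = tsum2 (\<lambda>h p0. tsum2 (\<Phi> h) (\<psi> c p0)) (lco p)"
    by (intro tsum2_cong psi_via_translation[OF xs, symmetric])
      (auto intro!: lin_intros trilin_form_comp2[OF \<Phi>] trilin_form_comp3[OF \<Phi>])
  finally show ?thesis .
qed

theorem psi_commutes_with_lco:
  assumes xs: "translation c xs" and coinvariant: "coinvariant_over (coinv sP mP sC \<rho>) xs"
  shows "teq3 sH sP sC
    (concat (map (\<lambda>(p', c'). map (\<lambda>(h, x). (h, x, c')) (lco p')) (\<psi> c p)))
    (concat (map (\<lambda>(h, p0). map (\<lambda>(x, c'). (h, x, c')) (\<psi> c p0)) (lco p)))"
  unfolding teq3_def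
proof (intro allI impI)
  fix \<Phi> assume "trilinear_form sH sP sC \<Phi>"
  then have \<Phi>: "trilin_form sH sP sC \<Phi>"
    using vector_space_H vector_space_P vector_space_C by (simp add: trilinear_form_iff_trilin_form)
  have "tsum2 (\<lambda>p' c'. tsum2 (\<lambda>h x. \<Phi> h x c') (lco p')) (\<psi> c p) =
      tsum2 (psi_lco_form \<Phi> p uH) xs"
    unfolding lco_psi_via_translation[OF xs \<Phi>] using coinvariant
    by (simp add: coinvariant_over_def trilin_form_psi_lco_form[OF \<Phi>] balanced_psi_lco_form[OF \<Phi>])
  then show "tsum3 \<Phi> (concat (map (\<lambda>(p', c'). map (\<lambda>(h, x). (h, x, c')) (lco p')) (\<psi> c p))) =
      tsum3 \<Phi> (concat (map (\<lambda>(h, p0). map (\<lambda>(x, c'). (h, x, c')) (\<psi> c p0)) (lco p)))"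
    by (simp add: psi_lco_via_translation[OF xs \<Phi>])
qed

lemma translation_if_colifting: "colifting sP mP uP sC \<rho> \<tau> \<Longrightarrow> translation c (\<tau> c)"
  by (simp add: colifting_def translation_def can_map_def)

lemma coinvariant_over_if_teq3:
  assumes "teq3 sH sP sP
    (concat (map (\<lambda>(x, y). concat (map (\<lambda>(hx, x0).
       map (\<lambda>(hy, y0). (mH hx hy, x0, y0)) (lco y)) (lco x))) xs))
    (map (\<lambda>(x, y). (uH, x, y)) xs)"
  shows "coinvariant_over B xs"
  unfolding coinvariant_over_def
  using teq3_tsum3[OF assms vector_space_H vector_space_P vector_space_P] by simp

end

section \<open>Coalgebra-Galois extensions\<close>

locale galois_entwined_comodule_algebra = entwined_comodule_algebra +
  fixes B
  assumes galois: "coalgebra_galois sP mP B sC \<rho>"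
begin

definition can_inv where
  "can_inv x d = (SOME ws. teq2 sP sC (can_map mP \<rho> ws) [(x, d)])"

lemma can_can_inv: "teq2 sP sC (can_map mP \<rho> (can_inv x d)) [(x, d)]"
  unfolding can_inv_def using galois by (auto simp: coalgebra_galois_def intro: someI_ex)

lemma translation_can_inv: "translation c (can_inv uP c)"
  by (simp add: translation_def can_can_inv)

lemma can_concat_can_inv: "teq2 sP sC (can_map mP \<rho> (concat (map (case_prod can_inv) zs))) zs"
proof (rule teq2I[OF vector_space_P vector_space_C])
  fix \<Psi> assume \<Psi>: "bilin_form sP sC \<Psi>"
  have "tsum2 \<Psi> (can_map mP \<rho> (can_inv x d)) = \<Psi> x d" for x d
    using teq2_tsum2[OF can_can_inv vector_space_P vector_space_C \<Psi>] by simp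
  then show "tsum2 \<Psi> (can_map mP \<rho> (concat (map (case_prod can_inv) zs))) = tsum2 \<Psi> zs"
    by simp
qed

lemma tsum2_eq_if_can_eq:
  assumes "bilin_form sP sP g" "balanced mP B g"
    and "teq2 sP sC (can_map mP \<rho> ws) (can_map mP \<rho> zs)"
  shows "tsum2 g ws = tsum2 g zs"
  using galois assms vector_space_P
  by (auto simp: coalgebra_galois_def teqB_def bilinear_map_iff_bilin_form balanced_def)

text \<open>Well defined on \<open>P \<otimes> C\<close> because \<open>g\<close> is \<open>B\<close>-balanced and \<open>can\<close> is injective on
  \<open>P \<otimes>\<^sub>B P\<close>; the choice made by \<^const>\<open>can_inv\<close> does not matter.\<close>

definition can_transport where
  "can_transport g = (\<lambda>x d. tsum2 g (can_inv x d))"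

lemma tsum2_can_transport:
  assumes g: "bilin_form sP sP g" "balanced mP B g"
    and ws: "teq2 sP sC (can_map mP \<rho> ws) zs"
  shows "tsum2 (can_transport g) zs = tsum2 g ws"
proof -
  let ?vs = "concat (map (case_prod can_inv) zs)"
  have "teq2 sP sC (can_map mP \<rho> ?vs) (can_map mP \<rho> ws)"
    using teq2_trans[OF can_concat_can_inv teq2_sym[OF ws]] .
  then have "tsum2 g ?vs = tsum2 g ws"
    by (rule tsum2_eq_if_can_eq[OF g])
  then show ?thesis
    by (simp add: can_transport_def)
qed

lemma bilin_form_can_transport:
  assumes g: "bilin_form sP sP g" "balanced mP B g"
  shows "bilin_form sP sC (can_transport g)"
proof (rule bilin_form_if_well_defined[OF vector_space_P vector_space_C])
  fix zs zs' assume "teq2 sP sC zs zs'"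
  then show "tsum2 (can_transport g) zs = tsum2 (can_transport g) zs'"
    using tsum2_can_transport[OF g can_concat_can_inv]
      tsum2_can_transport[OF g teq2_trans[OF can_concat_can_inv]] by metis
next
  fix a zs
  let ?vs = "concat (map (case_prod can_inv) zs)"
  have "teq2 sP sC (can_map mP \<rho> (tscale sP a ?vs)) (tscale sP a zs)"
  proof (rule teq2I[OF vector_space_P vector_space_C])
    fix \<Psi> assume \<Psi>: "bilin_form sP sC \<Psi>"
    have "tsum2 \<Psi> (can_map mP \<rho> (tscale sP a ?vs)) = a * tsum2 \<Psi> (can_map mP \<rho> ?vs)"
      unfolding tsum2_can_map
      by (rule tsum2_tscale) (auto intro!: lin_intros bilin_form_comp_left[OF \<Psi>])
    also have "\<dots> = a * tsum2 \<Psi> zs"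
      using teq2_tsum2[OF can_concat_can_inv vector_space_P vector_space_C \<Psi>] by simp
    also have "\<dots> = tsum2 \<Psi> (tscale sP a zs)"
      using \<Psi> by (simp add: tsum2_tscale bilin_form_def)
    finally show "tsum2 \<Psi> (can_map mP \<rho> (tscale sP a ?vs)) = tsum2 \<Psi> (tscale sP a zs)" .
  qed
  then have "tsum2 (can_transport g) (tscale sP a zs) = tsum2 g (tscale sP a ?vs)"
    by (rule tsum2_can_transport[OF g])
  also have "\<dots> = a * tsum2 g ?vs"
    using g by (simp add: tsum2_tscale bilin_form_def)
  finally show "tsum2 (can_transport g) (tscale sP a zs) = a * tsum2 (can_transport g) zs"
    by (simp add: can_transport_def)
qed

lemma trilin_form_can_transport:
  assumes \<Gamma>: "trilin_form sH sP sP \<Gamma>" and bal: "\<And>h. balanced mP B (\<Gamma> h)"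
  shows "trilin_form sH sP sC (\<lambda>h. can_transport (\<Gamma> h))"
proof (rule trilin_formI)
  have bilin_\<Gamma>: "bilin_form sP sP (\<Gamma> h)" for h
    using \<Gamma> by (simp add: trilin_form_def bilin_form_def)
  show "lin_form sH (\<lambda>h. can_transport (\<Gamma> h) x d)" for x d
    unfolding can_transport_def by (auto intro!: lin_intros trilin_form_comp1[OF \<Gamma>])
  show "lin_form sP (\<lambda>x. can_transport (\<Gamma> h) x d)" "lin_form sC (can_transport (\<Gamma> h) x)" for h x d
    using bilin_form_can_transport[OF bilin_\<Gamma> bal] unfolding bilin_form_def by auto
qed

lemma coinvariant_over_if_translation:
  assumes xs: "translation c xs"
  shows "coinvariant_over B xs"
  unfolding coinvariant_over_def
proof (intro allI impI, elim conjE)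
  fix \<Gamma> assume \<Gamma>: "trilin_form sH sP sP \<Gamma>" and bal: "\<forall>h. balanced mP B (\<Gamma> h)"
  have bilin_\<Gamma>: "bilin_form sP sP (\<Gamma> h)" for h
    using \<Gamma> by (simp add: trilin_form_def bilin_form_def)
  define \<Gamma>' where "\<Gamma>' = (\<lambda>h. can_transport (\<Gamma> h))"
  have \<Gamma>'_eq: "tsum2 (\<Gamma>' h) zs = tsum2 (\<Gamma> h) ws" if "teq2 sP sC (can_map mP \<rho> ws) zs" for h ws zs
    using tsum2_can_transport[OF bilin_\<Gamma> bal[rule_format] that] by (simp add: \<Gamma>'_def)
  have "trilin_form sH sP sC \<Gamma>'"
    unfolding \<Gamma>'_def using trilin_form_can_transport[OF \<Gamma>] bal by blast
  note lin_\<Gamma>' = lin_intros trilin_form_comp1[OF this] trilin_form_comp2[OF this]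
    trilin_form_comp3[OF this]
  have \<Gamma>_via_\<Gamma>': "\<Gamma> h x y = tsum2 (\<lambda>q0. \<Gamma>' h (mP x q0)) (\<rho> y)" for h x y
    using \<Gamma>'_eq[OF teq2_refl, of h "[(x, y)]"] by simp
  have "tsum2 (\<lambda>x y. tsum2 (\<lambda>hx x0. tsum2 (\<lambda>hy y0. \<Gamma> (mH hx hy) x0 y0) (lco y)) (lco x)) xs =
      tsum2 (\<lambda>x y. tsum2 (\<lambda>hx x0. tsum2 (\<lambda>hy y0.
        tsum2 (\<lambda>q0. \<Gamma>' (mH hx hy) (mP x0 q0)) (\<rho> y0)) (lco y)) (lco x)) xs"
    by (simp add: \<Gamma>_via_\<Gamma>')
  also have "\<dots> = tsum2 (\<lambda>x y. tsum2 (\<lambda>hx x0. tsum2 (\<lambda>y0 y1.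
      tsum2 (\<lambda>hy y00. \<Gamma>' (mH hx hy) (mP x0 y00) y1) (lco y0)) (\<rho> y)) (lco x)) xs"
    by (intro tsum2_cong lco_rho_commute) (auto intro!: lin_\<Gamma>')
  also have "\<dots> = tsum2 (\<lambda>x y. tsum2 (\<lambda>y0 y1. tsum2 (\<lambda>hx x0.
      tsum2 (\<lambda>hy y00. \<Gamma>' (mH hx hy) (mP x0 y00) y1) (lco y0)) (lco x)) (\<rho> y)) xs"
    by (intro tsum2_cong) (rule tsum2_swap)
  also have "\<dots> = tsum2 (\<lambda>x y. tsum2 (\<lambda>y0 y1. tsum2 (\<lambda>h w. \<Gamma>' h w y1) (lco (mP x y0))) (\<rho> y)) xs"
    by (intro tsum2_cong, subst lco_mult) (auto intro!: lin_\<Gamma>')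
  also have "\<dots> = tsum2 (\<lambda>h w. \<Gamma>' h w c) (lco uP)"
    by (rule translation_tsum2[OF xs, of "\<lambda>w d. tsum2 (\<lambda>h w'. \<Gamma>' h w' d) (lco w)"])
      (auto intro!: lin_\<Gamma>')
  also have "\<dots> = \<Gamma>' uH uP c"
    by (rule lco_unit) (auto intro!: lin_\<Gamma>')
  also have "\<dots> = tsum2 (\<Gamma> uH) xs"
    using \<Gamma>'_eq[of xs "[(uP, c)]" uH] xs by (simp add: translation_def)
  finally show "tsum2 (\<lambda>x y. tsum2 (\<lambda>hx x0. tsum2 (\<lambda>hy y0. \<Gamma> (mH hx hy) x0 y0) (lco y)) (lco x)) xs =
      tsum2 (\<Gamma> uH) xs" .
qed

end

lemma (in entwined_comodule_algebra) ex_coinvariant_translation_if_galois: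
  assumes "coalgebra_galois sP mP B sC \<rho>"
  shows "\<exists>xs. translation c xs \<and> coinvariant_over B xs"
proof -
  interpret galois_entwined_comodule_algebra sH mH uH \<Delta>H \<epsilon>H sC \<Delta>C \<epsilon>C sP mP uP \<psi> \<rho> lco B
    by unfold_locales (fact assms)
  show ?thesis
    using translation_can_inv coinvariant_over_if_translation by blast
qed

theorem mainTheorem7:
  fixes sH :: "'k::field \<Rightarrow> 'h::ab_group_add \<Rightarrow> 'h"
    and mH :: "'h \<Rightarrow> 'h \<Rightarrow> 'h" and uH :: 'h
    and \<Delta>H :: "'h \<Rightarrow> ('h \<times> 'h) list" and \<epsilon>H :: "'h \<Rightarrow> 'k" and S :: "'h \<Rightarrow> 'h"
    and sC :: "'k \<Rightarrow> 'c::ab_group_add \<Rightarrow> 'c"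
    and \<Delta>C :: "'c \<Rightarrow> ('c \<times> 'c) list" and \<epsilon>C :: "'c \<Rightarrow> 'k"
    and sP :: "'k \<Rightarrow> 'p::ab_group_add \<Rightarrow> 'p"
    and mP :: "'p \<Rightarrow> 'p \<Rightarrow> 'p" and uP :: 'p
    and \<psi> :: "'c \<Rightarrow> 'p \<Rightarrow> ('p \<times> 'c) list"
    and \<rho> :: "'p \<Rightarrow> ('p \<times> 'c) list"
    and lco :: "'p \<Rightarrow> ('h \<times> 'p) list"
    and B :: "'p set"
  assumes H: "hopf_algebra sH mH uH \<Delta>H \<epsilon>H S"
    and ent: "entwining sP mP uP sC \<Delta>C \<epsilon>C \<psi>"
    and entmod: "entwined_module sP mP sC \<Delta>C \<epsilon>C \<psi> \<rho>"
    and B_def: "B = coinv sP mP sC \<rho>"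
    and bicom: "bicomodule sH \<Delta>H \<epsilon>H sP sC \<Delta>C \<epsilon>C lco \<rho>"
    and comalg: "comodule_algebra sH mH uH \<Delta>H \<epsilon>H sP mP uP lco"
    and cases: "(\<exists>\<tau>. colifting sP mP uP sC \<rho> \<tau> \<and>
                   (\<forall>c. teq3 sH sP sP
                      (concat (map (\<lambda>(x, y). concat (map (\<lambda>(hx, x0).
                          map (\<lambda>(hy, y0). (mH hx hy, x0, y0)) (lco y)) (lco x))) (\<tau> c)))
                      (map (\<lambda>(x, y). (uH, x, y)) (\<tau> c))))
               \<or> (coalgebra_galois sP mP B sC \<rho> \<and> B \<subseteq> left_coinv sH uH sP lco)"
  shows "\<forall>c p. teq3 sH sP sC
           (concat (map (\<lambda>(p', c'). map (\<lambda>(h, x). (h, x, c')) (lco p')) (\<psi> c p)))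
           (concat (map (\<lambda>(h, p0). map (\<lambda>(x, c'). (h, x, c')) (\<psi> c p0)) (lco p)))"
proof -
  interpret entwined_comodule_algebra sH mH uH \<Delta>H \<epsilon>H sC \<Delta>C \<epsilon>C sP mP uP \<psi> \<rho> lco
    using H ent entmod bicom comalg by unfold_locales (simp add: hopf_algebra_def)
  \<comment> \<open>Case (b) does not need \<open>B \<subseteq> left_coinv sH uH sP lco\<close>: the coaction on \<open>P \<otimes>\<^sub>B P\<close>
    is never formed, coinvariance is only tested against \<open>B\<close>-balanced forms.\<close>
  have "\<exists>xs. translation c xs \<and> coinvariant_over B xs" for c
    using cases translation_if_colifting coinvariant_over_if_teq3 ex_coinvariant_translation_if_galois
    by blast
  then show ?thesis
    unfolding B_def using psi_commutes_with_lco by blast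
qed

end
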